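(* Let $\epsilon>0$ and let $G=(S,B,E)$ be a bipartite graph with weights $w:S\to\mathbb{R}_+$ and a fixed arrival order of $B$. For $y\in[0,1]^S$ let $f(y)$ be the total weight $w(M)$ of the matching $M$ produced by $\epsilon$-\textsc{Ranking} on $G$ with samples $x_j=y_j$. Let $x\in[0,1]^S$, $j^\star\in S$ and $\theta\in[0,1]$ be arbitrary, and define $x'$ by $x'_{j^\star}=\theta$ and $x'_j=x_j$ for $j\neq j^\star$. Then \[ |f(x)-f(x')|\le\left(1+\frac{2}{\epsilon}\right)w_{j^\star}. \]
   Context: Buyers $B$ arrive one at a time in the fixed order, each revealing its neighborhood $N(i)\subseteq S$. $\epsilon$-\textsc{Ranking} with samples $x\in[0,1]^S$: when buyer $i$ arrives, match $i$ to an unmatched $j\in N(i)$ maximizing $w_j(1-e^{x_j-1-\epsilon})$ (leave $i$ unmatched if none exists), with ties broken according to a fixed total order on $S$. $w(M)=\sum_{\{i,j\}\in M}w_j$ where $j\in S$. *)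

theory Defs
  imports Complex_Main
begin

definition eps_score :: "('s \<Rightarrow> real) \<Rightarrow> real \<Rightarrow> ('s \<Rightarrow> real) \<Rightarrow> 's \<Rightarrow> real" where
  "eps_score w eps x j = w j * (1 - exp (x j - 1 - eps))"

text \<open>The chosen item among candidate set C: maximal score, ties broken by the
  fixed total order on S given by an injective rank function tb (smaller rank first).\<close>
definition eps_pick :: "('s \<Rightarrow> real) \<Rightarrow> real \<Rightarrow> ('s \<Rightarrow> real) \<Rightarrow> ('s \<Rightarrow> nat) \<Rightarrow> 's set \<Rightarrow> 's" where
  "eps_pick w eps x tb C = (THE j. j \<in> C \<and> (\<forall>k\<in>C. eps_score w eps x k < eps_score w eps x j
        \<or> (eps_score w eps x k = eps_score w eps x j \<and> tb j \<le> tb k)))"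

fun eps_ranking_run :: "('b \<Rightarrow> 's set) \<Rightarrow> ('s \<Rightarrow> real) \<Rightarrow> real \<Rightarrow> ('s \<Rightarrow> nat) \<Rightarrow> ('s \<Rightarrow> real)
    \<Rightarrow> 'b list \<Rightarrow> ('b \<times> 's) set \<Rightarrow> ('b \<times> 's) set" where
  "eps_ranking_run N w eps tb x [] M = M"
| "eps_ranking_run N w eps tb x (i # bs) M =
     (let C = {j \<in> N i. j \<notin> snd ` M} in
      if C = {} then eps_ranking_run N w eps tb x bs M
      else eps_ranking_run N w eps tb x bs (insert (i, eps_pick w eps x tb C) M))"

definition eps_ranking :: "('b \<Rightarrow> 's set) \<Rightarrow> ('s \<Rightarrow> real) \<Rightarrow> real \<Rightarrow> ('s \<Rightarrow> nat) \<Rightarrow> 'b list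
    \<Rightarrow> ('s \<Rightarrow> real) \<Rightarrow> ('b \<times> 's) set" where
  "eps_ranking N w eps tb bs x = eps_ranking_run N w eps tb x bs {}"

definition match_weight :: "('s \<Rightarrow> real) \<Rightarrow> ('b \<times> 's) set \<Rightarrow> real" where
  "match_weight w M = (\<Sum>(i, j)\<in>M. w j)"

end

theory Submission
  imports Defs "HOL-Library.Product_Lexorder"
begin

text \<open>
  Let D be the run of \<open>\<epsilon>\<close>-Ranking in which \<open>j\<^sup>\<star>\<close> is matched before any buyer arrives; D does
  not depend on the sample of \<open>j\<^sup>\<star>\<close>. Compare, for fixed samples, the run from the empty
  matching with D. Buyer by buyer, the two sets of matched items either coincide, or D has
  exactly one extra item a whose score is at most the score of \<open>j\<^sup>\<star>\<close>: initially a is \<open>j\<^sup>\<star>\<close>,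
  and when the first run takes a, D takes its next best item instead, which becomes the new a.
  Since the score of an item j lies between \<open>w\<^sub>j (1 - e\<^sup>-\<^sup>\<epsilon>)\<close> and \<open>w\<^sub>j\<close>, this gives
  \<open>w\<^sub>a \<le> (1 + 1/\<epsilon>) w\<^sub>j\<^sub>\<star>\<close>. Hence both f(x) and f(x') lie in the interval
  \<open>[w(D) - (1 + 1/\<epsilon>) w\<^sub>j\<^sub>\<star>, w(D)]\<close>.
\<close>

definition pick_key ::
    "('s \<Rightarrow> real) \<Rightarrow> real \<Rightarrow> ('s \<Rightarrow> real) \<Rightarrow> ('s \<Rightarrow> nat) \<Rightarrow> 's \<Rightarrow> real \<times> int" where
  "pick_key w eps x tb j = (eps_score w eps x j, - int (tb j))"

lemma inj_on_pick_key: "inj_on tb C \<Longrightarrow> inj_on (pick_key w eps x tb) C"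
  by (auto simp: pick_key_def inj_on_def)

lemma pick_key_le_iff:
  "pick_key w eps x tb k \<le> pick_key w eps x tb j \<longleftrightarrow>
     eps_score w eps x k < eps_score w eps x j
     \<or> (eps_score w eps x k = eps_score w eps x j \<and> tb j \<le> tb k)"
  by (auto simp: pick_key_def)

lemma eps_pick_conv_pick_key:
  "eps_pick w eps x tb C = (THE j. j \<in> C \<and> (\<forall>k\<in>C. pick_key w eps x tb k \<le> pick_key w eps x tb j))"
  unfolding eps_pick_def pick_key_le_iff ..

lemma eps_pick_eqI:
  assumes "inj_on tb C" "j \<in> C" "\<And>k. k \<in> C \<Longrightarrow> pick_key w eps x tb k \<le> pick_key w eps x tb j"
  shows "eps_pick w eps x tb C = j"
  unfolding eps_pick_conv_pick_key
proof (rule the_equality)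
  show "j \<in> C \<and> (\<forall>k\<in>C. pick_key w eps x tb k \<le> pick_key w eps x tb j)"
    using assms(2,3) by blast
next
  fix j' assume j': "j' \<in> C \<and> (\<forall>k\<in>C. pick_key w eps x tb k \<le> pick_key w eps x tb j')"
  have "pick_key w eps x tb j' = pick_key w eps x tb j"
  proof (rule antisym)
    show "pick_key w eps x tb j' \<le> pick_key w eps x tb j" using j' assms(3) by blast
    show "pick_key w eps x tb j \<le> pick_key w eps x tb j'" using j' assms(2) by blast
  qed
  then show "j' = j"
    using inj_onD[OF inj_on_pick_key[OF assms(1)]] assms(2) j' by blast
qed

lemma eps_pick_max:
  assumes "finite C" "C \<noteq> {}" "inj_on tb C"
  shows "eps_pick w eps x tb C \<in> C"
    and "\<And>k. k \<in> C \<Longrightarrow> pick_key w eps x tb k \<le> pick_key w eps x tb (eps_pick w eps x tb C)"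
proof -
  have "Max (pick_key w eps x tb ` C) \<in> pick_key w eps x tb ` C"
    using assms(1,2) by simp
  then obtain j where j: "j \<in> C" "pick_key w eps x tb j = Max (pick_key w eps x tb ` C)"
    by (metis imageE)
  have max: "pick_key w eps x tb k \<le> pick_key w eps x tb j" if "k \<in> C" for k
    unfolding j(2) using assms(1) that by simp
  have "eps_pick w eps x tb C = j"
    using eps_pick_eqI[OF assms(3) j(1) max] .
  with j(1) max show "eps_pick w eps x tb C \<in> C"
    and "\<And>k. k \<in> C \<Longrightarrow> pick_key w eps x tb k \<le> pick_key w eps x tb (eps_pick w eps x tb C)"
    by simp_all
qed

lemma eps_pick_subset:
  assumes "finite C" "inj_on tb C" "C' \<subseteq> C" "eps_pick w eps x tb C \<in> C'"
  shows "eps_pick w eps x tb C' = eps_pick w eps x tb C"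
proof (rule eps_pick_eqI)
  show "inj_on tb C'" using assms(2,3) by (rule inj_on_subset)
  have "C \<noteq> {}" using assms(3,4) by blast
  then show "pick_key w eps x tb k \<le> pick_key w eps x tb (eps_pick w eps x tb C)" if "k \<in> C'" for k
    using eps_pick_max(2)[OF assms(1) _ assms(2)] assms(3) that by blast
qed (rule assms(4))

lemma eps_score_pick_subset:
  assumes "finite C" "inj_on tb C" "C' \<subseteq> C" "C' \<noteq> {}"
  shows "eps_score w eps x (eps_pick w eps x tb C') \<le> eps_score w eps x (eps_pick w eps x tb C)"
proof -
  have "finite C'" "inj_on tb C'"
    using assms(1-3) by (auto intro: finite_subset inj_on_subset)
  then have "eps_pick w eps x tb C' \<in> C"
    using eps_pick_max(1)[of C'] assms(3,4) by blast
  moreover have "C \<noteq> {}" using assms(3,4) by blast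
  ultimately have "pick_key w eps x tb (eps_pick w eps x tb C') \<le> pick_key w eps x tb (eps_pick w eps x tb C)"
    using eps_pick_max(2)[OF assms(1) _ assms(2)] by blast
  then show ?thesis by (auto simp: pick_key_def)
qed

lemma eps_pick_cong:
  assumes "\<And>k. k \<in> C \<Longrightarrow> x k = x' k"
  shows "eps_pick w eps x tb C = eps_pick w eps x' tb C"
proof -
  have "\<And>k. k \<in> C \<Longrightarrow> pick_key w eps x tb k = pick_key w eps x' tb k"
    using assms by (simp add: pick_key_def eps_score_def)
  then have "\<And>j. (j \<in> C \<and> (\<forall>k\<in>C. pick_key w eps x tb k \<le> pick_key w eps x tb j))
      \<longleftrightarrow> (j \<in> C \<and> (\<forall>k\<in>C. pick_key w eps x' tb k \<le> pick_key w eps x' tb j))"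
    by auto
  then show ?thesis unfolding eps_pick_conv_pick_key by (simp only:)
qed

definition eps_ranking_step :: "('b \<Rightarrow> 's set) \<Rightarrow> ('s \<Rightarrow> real) \<Rightarrow> real \<Rightarrow> ('s \<Rightarrow> nat)
    \<Rightarrow> ('s \<Rightarrow> real) \<Rightarrow> 'b \<Rightarrow> ('b \<times> 's) set \<Rightarrow> ('b \<times> 's) set" where
  "eps_ranking_step N w eps tb x i M =
     (let C = N i - snd ` M in if C = {} then M else insert (i, eps_pick w eps x tb C) M)"

definition next_items :: "('s \<Rightarrow> real) \<Rightarrow> real \<Rightarrow> ('s \<Rightarrow> real) \<Rightarrow> ('s \<Rightarrow> nat)
    \<Rightarrow> 's set \<Rightarrow> 's set \<Rightarrow> 's set" where
  "next_items w eps x tb A U =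
     (let C = A - U in if C = {} then U else insert (eps_pick w eps x tb C) U)"

lemma next_items_eq:
  "A - U = {} \<Longrightarrow> next_items w eps x tb A U = U"
  "A - U \<noteq> {} \<Longrightarrow> next_items w eps x tb A U = insert (eps_pick w eps x tb (A - U)) U"
  by (simp_all add: next_items_def)

lemma next_items_insert_not_picked:
  assumes "finite A" "inj_on tb A" "A - U = {} \<or> eps_pick w eps x tb (A - U) \<noteq> a"
  shows "next_items w eps x tb A (insert a U) = insert a (next_items w eps x tb A U)"
proof (cases "A - U = {}")
  case True
  then have "A - insert a U = {}" by blast
  with True show ?thesis by (simp add: next_items_eq)
next
  case False
  let ?p = "eps_pick w eps x tb (A - U)"
  have fin: "finite (A - U)" using assms(1) by simp
  have inj: "inj_on tb (A - U)" by (rule inj_on_subset[OF assms(2)]) blast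
  have p: "?p \<in> A - insert a U" using eps_pick_max(1)[OF fin False inj] assms(3) False by blast
  then have "eps_pick w eps x tb (A - insert a U) = ?p" by (intro eps_pick_subset[OF fin inj]) auto
  moreover have "A - insert a U \<noteq> {}" using p by blast
  ultimately show ?thesis using False by (simp add: next_items_eq insert_commute)
qed

lemma eps_ranking_run_Cons:
  "eps_ranking_run N w eps tb x (i # bs) M
     = eps_ranking_run N w eps tb x bs (eps_ranking_step N w eps tb x i M)"
  unfolding eps_ranking_run.simps eps_ranking_step_def Let_def set_diff_eq
  by (simp only: if_distrib[of "eps_ranking_run N w eps tb x bs"])

declare eps_ranking_run.simps(2) [simp del]

lemma snd_image_eps_ranking_step:
  "snd ` eps_ranking_step N w eps tb x i M = next_items w eps x tb (N i) (snd ` M)"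
  by (simp add: eps_ranking_step_def next_items_def Let_def)

lemma snd_image_subset_eps_ranking_step: "snd ` M \<subseteq> snd ` eps_ranking_step N w eps tb x i M"
  by (auto simp: eps_ranking_step_def Let_def)

lemma finite_eps_ranking_step: "finite M \<Longrightarrow> finite (eps_ranking_step N w eps tb x i M)"
  by (simp add: eps_ranking_step_def Let_def)

lemma inj_on_snd_eps_ranking_step:
  assumes "finite (N i)" "inj_on tb (N i)" "inj_on snd M"
  shows "inj_on snd (eps_ranking_step N w eps tb x i M)"
proof (cases "N i - snd ` M = {}")
  case False
  have "finite (N i - snd ` M)" "inj_on tb (N i - snd ` M)"
    using assms(1,2) by (auto intro: inj_on_subset)
  then have "eps_pick w eps x tb (N i - snd ` M) \<notin> snd ` M"
    using eps_pick_max(1)[OF _ False] by blast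
  with assms(3) False show ?thesis
    by (auto simp: eps_ranking_step_def Let_def inj_on_insert image_iff)
qed (simp add: eps_ranking_step_def assms(3))

lemma eps_ranking_step_update_matched:
  assumes "j \<in> snd ` M"
  shows "eps_ranking_step N w eps tb (x(j := t)) i M = eps_ranking_step N w eps tb x i M"
proof -
  have "eps_pick w eps (x(j := t)) tb (N i - snd ` M) = eps_pick w eps x tb (N i - snd ` M)"
    using assms by (intro eps_pick_cong) auto
  then show ?thesis by (simp add: eps_ranking_step_def Let_def)
qed

lemma finite_eps_ranking_run: "finite M \<Longrightarrow> finite (eps_ranking_run N w eps tb x bs M)"
  by (induction bs arbitrary: M) (simp_all add: eps_ranking_run_Cons finite_eps_ranking_step)

lemma inj_on_snd_eps_ranking_run:
  assumes "\<And>i. i \<in> set bs \<Longrightarrow> N i \<subseteq> S" "finite S" "inj_on tb S" "inj_on snd M"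
  shows "inj_on snd (eps_ranking_run N w eps tb x bs M)"
  using assms(1,4)
proof (induction bs arbitrary: M)
  case (Cons i bs)
  have "N i \<subseteq> S" using Cons.prems(1) by simp
  then have "inj_on snd (eps_ranking_step N w eps tb x i M)"
    using Cons.prems(2) finite_subset[OF _ assms(2)] inj_on_subset[OF assms(3)]
    by (intro inj_on_snd_eps_ranking_step) auto
  with Cons.IH Cons.prems(1) show ?case by (simp add: eps_ranking_run_Cons)
qed simp

lemma eps_ranking_run_update_matched:
  "j \<in> snd ` M
    \<Longrightarrow> eps_ranking_run N w eps tb (x(j := t)) bs M = eps_ranking_run N w eps tb x bs M"
proof (induction bs arbitrary: M)
  case (Cons i bs)
  have "j \<in> snd ` eps_ranking_step N w eps tb x i M"
    by (rule subsetD[OF snd_image_subset_eps_ranking_step Cons.prems])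
  then show ?case
    unfolding eps_ranking_run_Cons eps_ranking_step_update_matched[OF Cons.prems] by (rule Cons.IH)
qed simp

subsection \<open>Runs that differ by one item\<close>

definition low_item_gap :: "'s set \<Rightarrow> ('s \<Rightarrow> real) \<Rightarrow> real \<Rightarrow> 's set \<Rightarrow> 's set \<Rightarrow> bool" where
  "low_item_gap S f s U V \<longleftrightarrow> U = V \<or> (\<exists>a\<in>S. a \<notin> U \<and> V = insert a U \<and> f a \<le> s)"

lemma low_item_gap_next_items_picked:
  assumes A: "A \<subseteq> S" "finite A" "inj_on tb A"
    and picked: "A - U \<noteq> {}" "eps_pick w eps x tb (A - U) = a"
    and score_a: "eps_score w eps x a \<le> s"
  shows "low_item_gap S (eps_score w eps x) s
    (next_items w eps x tb A U) (next_items w eps x tb A (insert a U))"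
proof -
  let ?V = "insert a U"
  have next_U: "next_items w eps x tb A U = ?V"
    using picked by (simp add: next_items_eq)
  show ?thesis
  proof (cases "A - ?V = {}")
    case True
    then show ?thesis using next_U by (simp add: next_items_eq low_item_gap_def)
  next
    case False
    let ?q = "eps_pick w eps x tb (A - ?V)"
    have q: "?q \<in> A - ?V"
      by (rule eps_pick_max(1)[OF _ False]) (use A(2,3) in \<open>auto intro: inj_on_subset\<close>)
    have "eps_score w eps x ?q \<le> eps_score w eps x (eps_pick w eps x tb (A - U))"
      by (rule eps_score_pick_subset[OF _ _ _ False]) (use A(2,3) in \<open>auto intro: inj_on_subset\<close>)
    with q picked(2) show ?thesis
      unfolding low_item_gap_def next_U next_items_eq(2)[OF False]
      using score_a A(1) by (intro disjI2 bexI[of _ ?q]) auto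
  qed
qed

lemma low_item_gap_next_items:
  assumes gap: "low_item_gap S (eps_score w eps x) s U V"
    and A: "A \<subseteq> S" "finite A" "inj_on tb A"
  shows "low_item_gap S (eps_score w eps x) s (next_items w eps x tb A U) (next_items w eps x tb A V)"
proof -
  let ?pick = "eps_pick w eps x tb"
  from gap consider (same) "U = V"
    | (extra) a where "a \<in> S" "a \<notin> U" "V = insert a U" "eps_score w eps x a \<le> s"
    unfolding low_item_gap_def by blast
  then show ?thesis
  proof cases
    case same
    then show ?thesis by (simp add: low_item_gap_def)
  next
    case extra
    consider (kept) "A - U = {} \<or> ?pick (A - U) \<noteq> a" | (taken) "A - U \<noteq> {}" "?pick (A - U) = a"
      by blast
    then show ?thesis
    proof cases
      case kept
      then have "a \<notin> next_items w eps x tb A U"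
        using extra(2) by (auto simp: next_items_def)
      then show ?thesis
        unfolding extra(3) next_items_insert_not_picked[OF A(2,3) kept] low_item_gap_def
        using extra(1,4) by blast
    next
      case taken
      show ?thesis
        unfolding extra(3) by (rule low_item_gap_next_items_picked[OF A taken extra(4)])
    qed
  qed
qed

lemma low_item_gap_eps_ranking_run:
  assumes "\<And>i. i \<in> set bs \<Longrightarrow> N i \<subseteq> S" "finite S" "inj_on tb S"
    and "low_item_gap S (eps_score w eps x) s (snd ` M1) (snd ` M2)"
  shows "low_item_gap S (eps_score w eps x) s
    (snd ` eps_ranking_run N w eps tb x bs M1) (snd ` eps_ranking_run N w eps tb x bs M2)"
  using assms(1,4)
proof (induction bs arbitrary: M1 M2)
  case (Cons i bs)
  have "N i \<subseteq> S" using Cons.prems(1) by simp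
  then have "low_item_gap S (eps_score w eps x) s
      (snd ` eps_ranking_step N w eps tb x i M1) (snd ` eps_ranking_step N w eps tb x i M2)"
    unfolding snd_image_eps_ranking_step using Cons.prems(2) finite_subset[OF _ assms(2)]
      inj_on_subset[OF assms(3)]
    by (intro low_item_gap_next_items) auto
  with Cons.IH Cons.prems(1) show ?case by (simp add: eps_ranking_run_Cons)
qed simp

lemma low_item_gap_sum_le:
  fixes w :: "'s \<Rightarrow> real"
  assumes "low_item_gap S f s U V" "finite U" "0 \<le> K"
    and "\<And>a. a \<in> S \<Longrightarrow> f a \<le> s \<Longrightarrow> 0 \<le> w a \<and> w a \<le> K"
  shows "sum w U \<le> sum w V" and "sum w V \<le> sum w U + K"
proof -
  have "sum w U \<le> sum w V \<and> sum w V \<le> sum w U + K"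
    using assms(1) unfolding low_item_gap_def
  proof (elim disjE bexE conjE)
    fix a assume "a \<in> S" "a \<notin> U" "V = insert a U" "f a \<le> s"
    then show ?thesis using assms(2) assms(4)[of a] by auto
  qed (simp add: assms(3))
  then show "sum w U \<le> sum w V" "sum w V \<le> sum w U + K" by simp_all
qed

lemma match_weight_eq_sum_items: "inj_on snd M \<Longrightarrow> match_weight w M = sum w (snd ` M)"
  unfolding match_weight_def by (simp add: sum.reindex split_def comp_def)

lemma eps_score_le_weight: "0 \<le> w j \<Longrightarrow> eps_score w eps y j \<le> w j"
  unfolding eps_score_def by (simp add: mult_left_le)

lemma weight_mult_le_eps_score:
  "0 \<le> w a \<Longrightarrow> y a \<le> 1 \<Longrightarrow> w a * (1 - exp (- eps)) \<le> eps_score w eps y a"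
  unfolding eps_score_def by (intro mult_left_mono) auto

lemma divide_one_plus_le_one_minus_exp_neg:
  fixes t :: real
  assumes "0 \<le> t"
  shows "t / (1 + t) \<le> 1 - exp (- t)"
proof -
  have "exp (- t) \<le> 1 / (1 + t)"
    using exp_ge_add_one_self[of t] assms by (simp add: exp_minus divide_simps)
  then show ?thesis using assms by (simp add: field_simps)
qed

lemma weight_le_of_eps_score_le:
  assumes "0 < eps" "0 \<le> w a" "0 \<le> w j" "y a \<le> 1"
    and "eps_score w eps y a \<le> eps_score w eps y j"
  shows "w a \<le> (1 + 1 / eps) * w j"
proof -
  have "w a * (eps / (1 + eps)) \<le> w a * (1 - exp (- eps))"
    using assms(1,2) by (intro mult_left_mono divide_one_plus_le_one_minus_exp_neg) simp_all
  also have "\<dots> \<le> eps_score w eps y a" using assms(2,4) by (rule weight_mult_le_eps_score)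
  also have "\<dots> \<le> eps_score w eps y j" by (rule assms(5))
  also have "\<dots> \<le> w j" using assms(3) by (rule eps_score_le_weight)
  finally show ?thesis using assms(1) by (simp add: field_simps)
qed

lemma eps_ranking_weight_prematched:
  fixes N :: "'b \<Rightarrow> 's set" and b :: 'b
  assumes "0 < eps" "finite S" "\<And>i. i \<in> set bs \<Longrightarrow> N i \<subseteq> S"
    and "\<And>j. j \<in> S \<Longrightarrow> 0 \<le> w j" "inj_on tb S" "\<And>j. j \<in> S \<Longrightarrow> y j \<le> 1" "jstar \<in> S"
  defines "D \<equiv> match_weight w (eps_ranking_run N w eps tb y bs {(b, jstar)})"
  shows "match_weight w (eps_ranking N w eps tb bs y) \<le> D"
    and "D \<le> match_weight w (eps_ranking N w eps tb bs y) + (1 + 1 / eps) * w jstar"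
proof -
  let ?R = "eps_ranking_run N w eps tb y bs"
  have gap: "low_item_gap S (eps_score w eps y) (eps_score w eps y jstar)
      (snd ` ?R {}) (snd ` ?R {(b, jstar)})"
    by (rule low_item_gap_eps_ranking_run[OF assms(3,2,5)])
      (auto simp: low_item_gap_def intro!: bexI[of _ jstar] assms(7))
  have fin: "finite (snd ` ?R {})" by (simp add: finite_eps_ranking_run)
  have K: "0 \<le> (1 + 1 / eps) * w jstar" using assms(1,4,7) by simp
  have bound: "0 \<le> w a \<and> w a \<le> (1 + 1 / eps) * w jstar"
    if "a \<in> S" "eps_score w eps y a \<le> eps_score w eps y jstar" for a
    using weight_le_of_eps_score_le[OF assms(1) assms(4)[OF that(1)] assms(4)[OF assms(7)]
        assms(6)[OF that(1)] that(2)] assms(4)[OF that(1)]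
    by simp
  note sums = low_item_gap_sum_le[OF gap fin K bound]
  note weight_eq = match_weight_eq_sum_items[OF inj_on_snd_eps_ranking_run[OF assms(3,2,5)]]
  have "match_weight w (eps_ranking N w eps tb bs y) = sum w (snd ` ?R {})"
    unfolding eps_ranking_def by (simp add: weight_eq)
  moreover have "D = sum w (snd ` ?R {(b, jstar)})"
    unfolding D_def by (simp add: weight_eq)
  ultimately show "match_weight w (eps_ranking N w eps tb bs y) \<le> D"
    and "D \<le> match_weight w (eps_ranking N w eps tb bs y) + (1 + 1 / eps) * w jstar"
    using sums by simp_all
qed

theorem lemma7:
  fixes S :: "'s set" and bs :: "'b list" and N :: "'b \<Rightarrow> 's set"
    and w :: "'s \<Rightarrow> real" and tb :: "'s \<Rightarrow> nat" and eps :: real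
    and x :: "'s \<Rightarrow> real" and jstar :: 's and \<theta> :: real
  assumes "eps > 0"
    and "finite S"
    and "distinct bs"
    and "\<And>i. i \<in> set bs \<Longrightarrow> N i \<subseteq> S"
    and "\<And>j. j \<in> S \<Longrightarrow> w j \<ge> 0"
    and "inj_on tb S"
    and "\<And>j. j \<in> S \<Longrightarrow> 0 \<le> x j \<and> x j \<le> 1"
    and "jstar \<in> S"
    and "0 \<le> \<theta>" and "\<theta> \<le> 1"
  shows "\<bar>match_weight w (eps_ranking N w eps tb bs x)
          - match_weight w (eps_ranking N w eps tb bs (x(jstar := \<theta>)))\<bar>
         \<le> (1 + 2 / eps) * w jstar"
proof -
  let ?x' = "x(jstar := \<theta>)"
  have same_prematched: "eps_ranking_run N w eps tb ?x' bs {(undefined, jstar)}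
      = eps_ranking_run N w eps tb x bs {(undefined, jstar)}"
    by (rule eps_ranking_run_update_matched) simp
  have x_le: "x j \<le> 1" and x'_le: "?x' j \<le> 1" if "j \<in> S" for j
    using assms(7,10) that by simp_all
  let ?D = "match_weight w (eps_ranking_run N w eps tb x bs {(undefined, jstar)})"
  have close: "match_weight w (eps_ranking N w eps tb bs x) \<le> ?D
      \<and> ?D \<le> match_weight w (eps_ranking N w eps tb bs x) + (1 + 1 / eps) * w jstar"
    by (intro conjI eps_ranking_weight_prematched[where S = S] assms(1,2,4,5,6,8) x_le)
  have close': "match_weight w (eps_ranking N w eps tb bs ?x') \<le> ?D
      \<and> ?D \<le> match_weight w (eps_ranking N w eps tb bs ?x') + (1 + 1 / eps) * w jstar"
    unfolding same_prematched[symmetric]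
    by (intro conjI eps_ranking_weight_prematched[where S = S] assms(1,2,4,5,6,8) x'_le)
  have "(1 + 1 / eps) * w jstar \<le> (1 + 2 / eps) * w jstar"
    using assms(1,5,8) by (intro mult_right_mono) (simp_all add: divide_right_mono)
  then show ?thesis using close close' by linarith
qed

end
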